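(* Let $\mathbb{F}$ be a finite field, $d,D\ge 0$ integers, $\gamma>0$, $f:\mathbb{F}^2\to\mathbb{F}$. For $a\in\mathbb{F}$ let $C_a(y)$ be a best-fit degree-$d$ polynomial for $f$ on the vertical line $\{(a,y):y\in\mathbb{F}\}$, and for $b\in\mathbb{F}$ let $R_b(x)$ be a best-fit degree-$d$ polynomial for $f$ on the horizontal line $\{(x,b):x\in\mathbb{F}\}$. Let $H\subseteq\mathbb{F}^2$ be such that $C_a(b)=R_b(a)=f(a,b)$ for all $(a,b)\in H$. Let $S_1,S_2\subseteq\mathbb{F}$ with $S_1\neq\emptyset$ be such that for every $b\in S_2$, $|\{a\in S_1:(a,b)\in H\}|\ge\frac{\gamma}{2}|S_1|$, and suppose $D<\frac{\gamma}{2}|S_1|$. If $A(x,y,z)\in\mathbb{F}[x,y,z]$ has $(1,1,d)$-weighted degree at most $D$ and $A(a,y,C_a(y))\equiv 0$ for all $a\in S_1$, then $A(a,b,f(a,b))=0$ for all $(a,b)\in H$ with $b\in S_2$.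
   Context: The $(1,1,d)$-weighted degree of $A(x,y,z)$ is the maximum of $i+j+dk$ over monomials $x^iy^jz^k$ with non-zero coefficient. A best-fit degree-$d$ polynomial for $f$ on a line is a univariate polynomial of degree at most $d$ (in the line parameter) agreeing with $f$ on the maximum number of points of the line. *)

theory Defs
  imports "HOL-Computational_Algebra.Polynomial"
begin

text \<open>Trivariate polynomials A(x,y,z) over a ring, represented by their coefficient
  function: A i j k is the coefficient of x^i y^j z^k; the support must be finite.\<close>

definition tri_support :: "(nat \<Rightarrow> nat \<Rightarrow> nat \<Rightarrow> 'a::zero) \<Rightarrow> (nat \<times> nat \<times> nat) set" where
  "tri_support A = {(i,j,k). A i j k \<noteq> 0}"

definition is_tripoly :: "(nat \<Rightarrow> nat \<Rightarrow> nat \<Rightarrow> 'a::zero) \<Rightarrow> bool" where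
  "is_tripoly A \<longleftrightarrow> finite (tri_support A)"

definition weighted_deg_le :: "nat \<Rightarrow> (nat \<Rightarrow> nat \<Rightarrow> nat \<Rightarrow> 'a::zero) \<Rightarrow> nat \<Rightarrow> bool" where
  "weighted_deg_le d A D \<longleftrightarrow> (\<forall>i j k. A i j k \<noteq> 0 \<longrightarrow> i + j + d * k \<le> D)"

definition tri_eval :: "(nat \<Rightarrow> nat \<Rightarrow> nat \<Rightarrow> 'a::comm_ring_1) \<Rightarrow> 'a \<Rightarrow> 'a \<Rightarrow> 'a \<Rightarrow> 'a" where
  "tri_eval A x y z = (\<Sum>(i,j,k)\<in>tri_support A. A i j k * x ^ i * y ^ j * z ^ k)"

definition tri_subst :: "(nat \<Rightarrow> nat \<Rightarrow> nat \<Rightarrow> 'a::comm_ring_1) \<Rightarrow> 'a \<Rightarrow> 'a poly \<Rightarrow> 'a poly" where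
  "tri_subst A a C = (\<Sum>(i,j,k)\<in>tri_support A. smult (A i j k * a ^ i) (monom 1 j * C ^ k))"

definition best_fit :: "nat \<Rightarrow> ('a::{finite,field} \<Rightarrow> 'a) \<Rightarrow> 'a poly \<Rightarrow> bool" where
  "best_fit d g p \<longleftrightarrow> degree p \<le> d \<and>
     (\<forall>q. degree q \<le> d \<longrightarrow> card {t. poly q t = g t} \<le> card {t. poly p t = g t})"

end

theory Submission
  imports Defs
begin

text \<open>Fix (a, b) \<in> H with b \<in> S2 and restrict A to the horizontal line through b, substituting
  the row fit R_b for z: this gives the univariate polynomial x \<mapsto> A(x, b, R_b(x)) of degree
  at most D. For every a' \<in> S1 with (a', b) \<in> H it takes the value
  A(a', b, f(a', b)) = A(a', b, C_a'(b)) = 0, so it has more than D roots and vanishes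
  identically; at x = a it gives A(a, b, f(a, b)) = 0.\<close>

definition tri_subst_row :: "(nat \<Rightarrow> nat \<Rightarrow> nat \<Rightarrow> 'a::comm_ring_1) \<Rightarrow> 'a \<Rightarrow> 'a poly \<Rightarrow> 'a poly" where
  "tri_subst_row A b r = (\<Sum>(i,j,k)\<in>tri_support A. smult (A i j k * b ^ j) (monom 1 i * r ^ k))"

lemma poly_tri_subst: "poly (tri_subst A a c) y = tri_eval A a y (poly c y)"
  unfolding tri_subst_def tri_eval_def poly_sum
  by (rule sum.cong) (auto simp: poly_monom)

lemma poly_tri_subst_row: "poly (tri_subst_row A b r) x = tri_eval A x b (poly r x)"
  unfolding tri_subst_row_def tri_eval_def poly_sum
  by (rule sum.cong) (auto simp: poly_monom)

lemma degree_tri_subst_row_le: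
  assumes "is_tripoly A" "weighted_deg_le d A D" "degree r \<le> d"
  shows "degree (tri_subst_row A b r) \<le> D"
  unfolding tri_subst_row_def
proof (rule degree_sum_le)
  show "finite (tri_support A)" using assms(1) by (simp add: is_tripoly_def)
next
  fix p assume p: "p \<in> tri_support A"
  obtain i j k where p_eq: "p = (i, j, k)" by (cases p) auto
  have "degree (smult (A i j k * b ^ j) (monom 1 i * r ^ k)) \<le> degree (monom (1::'a) i * r ^ k)"
    by (rule degree_smult_le)
  also have "\<dots> \<le> degree (monom (1::'a) i) + degree (r ^ k)" by (rule degree_mult_le)
  also have "\<dots> \<le> i + degree r * k"
    using degree_monom_le[of "1::'a" i] degree_power_le[of r k] by linarith
  also have "\<dots> \<le> i + d * k" using assms(3) by simp
  also have "\<dots> \<le> D"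
    using assms(2) p p_eq unfolding weighted_deg_le_def tri_support_def by force
  finally show "degree (case p of (i, j, k) \<Rightarrow> smult (A i j k * b ^ j) (monom 1 i * r ^ k)) \<le> D"
    using p_eq by simp
qed

theorem lemmaA4:
  fixes f :: "'a::{finite,field} \<Rightarrow> 'a \<Rightarrow> 'a"
    and d D :: nat and \<gamma> :: real
    and C R :: "'a \<Rightarrow> 'a poly"
    and H :: "('a \<times> 'a) set" and S1 S2 :: "'a set"
    and A :: "nat \<Rightarrow> nat \<Rightarrow> nat \<Rightarrow> 'a"
  assumes "\<gamma> > 0"
    and C_fit: "\<And>a. best_fit d (\<lambda>y. f a y) (C a)"
    and R_fit: "\<And>b. best_fit d (\<lambda>x. f x b) (R b)"
    and H: "\<And>a b. (a, b) \<in> H \<Longrightarrow> poly (C a) b = f a b \<and> poly (R b) a = f a b"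
    and "S1 \<noteq> {}"
    and S2: "\<And>b. b \<in> S2 \<Longrightarrow> real (card {a \<in> S1. (a, b) \<in> H}) \<ge> \<gamma> / 2 * real (card S1)"
    and "real D < \<gamma> / 2 * real (card S1)"
    and "is_tripoly A"
    and "weighted_deg_le d A D"
    and "\<And>a. a \<in> S1 \<Longrightarrow> tri_subst A a (C a) = 0"
  shows "\<forall>(a, b) \<in> H. b \<in> S2 \<longrightarrow> tri_eval A a b (f a b) = 0"
proof (intro ballI impI, clarify)
  fix a b assume ab: "(a, b) \<in> H" and b: "b \<in> S2"
  define P where "P = tri_subst_row A b (R b)"
  have "degree (R b) \<le> d" using R_fit[of b] by (simp add: best_fit_def)
  then have "degree P \<le> D" unfolding P_def by (rule degree_tri_subst_row_le[OF assms(8,9)])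
  moreover have "real D < real (card {a' \<in> S1. (a', b) \<in> H})" using S2[OF b] assms(7) by linarith
  ultimately have deg_P: "degree P < card {a' \<in> S1. (a', b) \<in> H}" by simp
  have "poly P a' = 0" if "a' \<in> S1" "(a', b) \<in> H" for a'
    using H[OF that(2)] assms(10)[OF that(1)]
    by (metis P_def poly_tri_subst poly_tri_subst_row poly_0)
  then have "P = 0" using deg_P by (intro poly_eqI_degree) auto
  then show "tri_eval A a b (f a b) = 0"
    using H[OF ab] poly_tri_subst_row[of A b "R b" a] by (simp add: P_def)
qed

end
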